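(* Let $f_i:\mathbb{R}^p\to\mathbb{R}$, $1\le i\le n$, be $L_i$-smooth for some $L_i>0$, and suppose $f=\frac1n\sum_{i=1}^nf_i$ takes the form $f(x)=g(Hx)$ for an $\alpha$-strongly convex and $\mathbf{L}$-smooth function $g:\mathbb{R}^m\to\mathbb{R}$ and $H\in\mathbb{R}^{m\times p}$. Then $L:=\max_{1\le i\le n}L_i$ satisfies $L\ge\alpha\|H\|_2^2$.
   Context: $h$ is $L$-smooth if $\|\nabla h(x)-\nabla h(y)\|\le L\|x-y\|$ for all $x,y$; $\alpha$-strongly convex ($\alpha\ge 0$) if $h(y)\ge h(x)+\langle y-x,\nabla h(x)\rangle+\frac\alpha2\|y-x\|^2$ for all $x,y$. $\|H\|_2=\sup_{x\ne0}\|Hx\|/\|x\|$ with Euclidean norms. *)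

theory Defs
  imports "HOL-Analysis.Analysis"
begin

definition L_smooth :: "real \<Rightarrow> ('a::euclidean_space \<Rightarrow> real) \<Rightarrow> bool" where
  "L_smooth L h \<longleftrightarrow> (\<exists>G. (\<forall>x. (h has_derivative (\<lambda>v. G x \<bullet> v)) (at x)) \<and>
      (\<forall>x y. norm (G x - G y) \<le> L * norm (x - y)))"

definition strongly_convex :: "real \<Rightarrow> ('a::euclidean_space \<Rightarrow> real) \<Rightarrow> bool" where
  "strongly_convex \<alpha> h \<longleftrightarrow> \<alpha> \<ge> 0 \<and> (\<exists>G. (\<forall>x. (h has_derivative (\<lambda>v. G x \<bullet> v)) (at x)) \<and>
      (\<forall>x y. h y \<ge> h x + (y - x) \<bullet> G x + \<alpha> / 2 * (norm (y - x))\<^sup>2))"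

end

theory Submission
  imports Defs
begin

text \<open>Strong convexity of \<open>g\<close> makes \<open>\<nabla>g\<close> \<open>\<alpha>\<close>-strongly monotone, and on the range of \<open>H\<close>
  the monotonicity of \<open>\<nabla>g\<close> equals that of \<open>\<nabla>f = H\<^sup>T \<nabla>g(H \<cdot>)\<close>. Hence
  \<open>\<alpha> \<parallel>Hv\<parallel>\<^sup>2 \<le> \<langle>\<nabla>f(v) - \<nabla>f(0), v\<rangle> \<le> L \<parallel>v\<parallel>\<^sup>2\<close>, because the average \<open>f\<close> of the \<open>f\<^sub>i\<close> is
  \<open>L\<close>-smooth with \<open>L = max L\<^sub>i\<close>. Taking the supremum over unit vectors \<open>v\<close> gives the claim.\<close>

lemma L_smooth_nonneg:
  assumes "L_smooth L (h :: 'a::euclidean_space \<Rightarrow> real)"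
  shows "L \<ge> 0"
proof -
  obtain G :: "'a \<Rightarrow> 'a" where "\<And>x y. norm (G x - G y) \<le> L * norm (x - y)"
    using assms unfolding L_smooth_def by metis
  then have "0 \<le> L * norm (0 - b)" if "b \<in> (Basis :: 'a set)" for b
    by (meson norm_ge_zero order_trans)
  moreover obtain b :: 'a where "b \<in> Basis"
    using nonempty_Basis by blast
  ultimately show ?thesis
    by (simp add: zero_le_mult_iff)
qed

lemma L_smooth_mono:
  assumes "L_smooth L h" and "L \<le> L'"
  shows "L_smooth L' h"
  using assms unfolding L_smooth_def
  by (meson mult_right_mono norm_ge_zero order_trans)

lemma L_smooth_scale:
  assumes "L_smooth L h" and "c \<ge> 0"
  shows "L_smooth (c * L) (\<lambda>x. c * h x)"
proof -
  obtain G where G: "\<And>x. (h has_derivative (\<lambda>v. G x \<bullet> v)) (at x)"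
    and lip: "\<And>x y. norm (G x - G y) \<le> L * norm (x - y)"
    using assms(1) unfolding L_smooth_def by blast
  have "((\<lambda>x. c * h x) has_derivative (\<lambda>v. (c *\<^sub>R G x) \<bullet> v)) (at x)" for x
    by (rule has_derivative_eq_rhs[OF has_derivative_mult_right[OF G]]) auto
  moreover have "norm (c *\<^sub>R G x - c *\<^sub>R G y) \<le> c * L * norm (x - y)" for x y
    using mult_left_mono[OF lip[of x y] assms(2)]
    by (simp add: assms(2) mult.assoc flip: scaleR_diff_right)
  ultimately show ?thesis
    unfolding L_smooth_def by (intro exI[of _ "\<lambda>x. c *\<^sub>R G x"]) blast
qed

lemma L_smooth_sum:
  assumes "finite I" and "\<forall>i\<in>I. L_smooth (Ls i) (f i)"
  shows "L_smooth (\<Sum>i\<in>I. Ls i) (\<lambda>x. \<Sum>i\<in>I. f i x)"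
proof -
  obtain G where G: "\<And>i x. i \<in> I \<Longrightarrow> (f i has_derivative (\<lambda>v. G i x \<bullet> v)) (at x)"
    and lip: "\<And>i x y. i \<in> I \<Longrightarrow> norm (G i x - G i y) \<le> Ls i * norm (x - y)"
    using assms(2) unfolding L_smooth_def by metis
  have "((\<lambda>x. \<Sum>i\<in>I. f i x) has_derivative (\<lambda>v. (\<Sum>i\<in>I. G i x) \<bullet> v)) (at x)" for x
    using has_derivative_sum[of I f, OF G] by (simp add: inner_sum_left)
  moreover have "norm ((\<Sum>i\<in>I. G i x) - (\<Sum>i\<in>I. G i y)) \<le> (\<Sum>i\<in>I. Ls i) * norm (x - y)"
    for x y
  proof -
    have "norm ((\<Sum>i\<in>I. G i x) - (\<Sum>i\<in>I. G i y)) \<le> (\<Sum>i\<in>I. norm (G i x - G i y))"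
      by (simp add: norm_sum flip: sum_subtractf)
    also have "\<dots> \<le> (\<Sum>i\<in>I. Ls i * norm (x - y))"
      by (intro sum_mono lip)
    finally show ?thesis
      by (simp add: sum_distrib_right)
  qed
  ultimately show ?thesis
    unfolding L_smooth_def by (intro exI[of _ "\<lambda>x. \<Sum>i\<in>I. G i x"]) blast
qed

lemma L_smooth_mean_Max:
  assumes "finite I" and "I \<noteq> {}" and "\<forall>i\<in>I. L_smooth (Ls i) (f i)"
  shows "L_smooth (Max (Ls ` I)) (\<lambda>x. (1 / real (card I)) * (\<Sum>i\<in>I. f i x))"
proof (rule L_smooth_mono)
  show "L_smooth ((1 / real (card I)) * (\<Sum>i\<in>I. Ls i)) (\<lambda>x. (1 / real (card I)) * (\<Sum>i\<in>I. f i x))"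
    using assms by (intro L_smooth_scale L_smooth_sum) auto
  have "(\<Sum>i\<in>I. Ls i) \<le> real (card I) * Max (Ls ` I)"
    using assms(1) by (intro sum_bounded_above) simp
  then show "(1 / real (card I)) * (\<Sum>i\<in>I. Ls i) \<le> Max (Ls ` I)"
    using assms(1,2) by (simp add: field_simps card_gt_0_iff)
qed

lemma strongly_convex_gradient_monotone:
  fixes h :: "'a::real_inner \<Rightarrow> real"
  assumes "\<And>x y. h y \<ge> h x + (y - x) \<bullet> G x + \<alpha> / 2 * (norm (y - x))\<^sup>2"
  shows "\<alpha> * (norm (y - x))\<^sup>2 \<le> (G y - G x) \<bullet> (y - x)"
  using assms[of x y] assms[of y x]
  by (simp add: inner_diff_left inner_diff_right inner_commute norm_minus_commute)

lemma gradient_compose_bounded_linear: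
  fixes A :: "'a::real_inner \<Rightarrow> 'b::real_inner"
  assumes "bounded_linear A"
    and "((\<lambda>x. g (A x)) has_derivative (\<lambda>v. Gh x \<bullet> v)) (at x)"
    and "(g has_derivative (\<lambda>w. Gg (A x) \<bullet> w)) (at (A x))"
  shows "Gh x \<bullet> v = Gg (A x) \<bullet> A v"
proof -
  have "((\<lambda>x. g (A x)) has_derivative (\<lambda>v. Gg (A x) \<bullet> A v)) (at x)"
    using has_derivative_compose[OF bounded_linear_imp_has_derivative[OF assms(1)] assms(3)]
    by (simp add: o_def)
  from has_derivative_unique[OF assms(2) this] show ?thesis
    by meson
qed

lemma onorm_square_le:
  fixes A :: "'a::{real_normed_vector, perfect_space} \<Rightarrow> 'b::real_normed_vector"
  assumes "bounded_linear A" and "L \<ge> 0"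
    and "\<And>v. \<alpha> * (norm (A v))\<^sup>2 \<le> L * (norm v)\<^sup>2"
  shows "\<alpha> * (onorm A)\<^sup>2 \<le> L"
proof (cases "\<alpha> > 0")
  case True
  have "norm (A v) \<le> sqrt (L / \<alpha>) * norm v" for v
  proof -
    have "(norm (A v))\<^sup>2 \<le> (sqrt (L / \<alpha>) * norm v)\<^sup>2"
      using assms(3)[of v] assms(2) True by (simp add: power_mult_distrib field_simps)
    then show ?thesis
      using assms(2) True by (simp add: power2_le_iff_abs_le)
  qed
  then have "onorm A \<le> sqrt (L / \<alpha>)"
    by (rule onorm_le)
  then have "(onorm A)\<^sup>2 \<le> L / \<alpha>"
    using onorm_pos_le[OF assms(1)] assms(2) True
    by (metis div_0 divide_nonneg_nonneg less_le power_mono real_sqrt_pow2)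
  then show ?thesis
    using True by (simp add: field_simps)
next
  case False
  then show ?thesis
    using assms(2) by (simp add: mult_nonpos_nonneg order_trans[of _ 0 L])
qed

lemma strongly_convex_compose_onorm_le:
  fixes A :: "'a::euclidean_space \<Rightarrow> 'b::euclidean_space"
  assumes "bounded_linear A" and "L_smooth L (\<lambda>x. g (A x))" and "strongly_convex \<alpha> g"
  shows "\<alpha> * (onorm A)\<^sup>2 \<le> L"
proof (rule onorm_square_le)
  obtain Gh where Gh: "\<And>x. ((\<lambda>x. g (A x)) has_derivative (\<lambda>v. Gh x \<bullet> v)) (at x)"
    and lip: "\<And>x y. norm (Gh x - Gh y) \<le> L * norm (x - y)"
    using assms(2) unfolding L_smooth_def by blast
  obtain Gg where Gg: "\<And>y. (g has_derivative (\<lambda>w. Gg y \<bullet> w)) (at y)"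
    and sc: "\<And>x y. g y \<ge> g x + (y - x) \<bullet> Gg x + \<alpha> / 2 * (norm (y - x))\<^sup>2"
    using assms(3) unfolding strongly_convex_def by blast
  have chain: "Gh x \<bullet> v = Gg (A x) \<bullet> A v" for x v
    using gradient_compose_bounded_linear[where Gh = Gh and Gg = Gg, OF assms(1) Gh Gg] by simp
  show "\<alpha> * (norm (A v))\<^sup>2 \<le> L * (norm v)\<^sup>2" for v
  proof -
    have "\<alpha> * (norm (A v))\<^sup>2 \<le> (Gg (A v) - Gg (A 0)) \<bullet> A v"
      using strongly_convex_gradient_monotone[OF sc, of "A v" "A 0"]
        linear_0[OF bounded_linear.linear[OF assms(1)]]
      by simp
    also have "\<dots> = (Gh v - Gh 0) \<bullet> v"
      by (simp add: chain inner_diff_left)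
    also have "\<dots> \<le> norm (Gh v - Gh 0) * norm v"
      by (rule norm_cauchy_schwarz)
    also have "\<dots> \<le> L * norm v * norm v"
      using lip[of v 0] by (simp add: mult_right_mono)
    finally show ?thesis
      by (simp add: power2_eq_square mult.assoc)
  qed
  show "bounded_linear A"
    by (fact assms(1))
  show "L \<ge> 0"
    using assms(2) by (rule L_smooth_nonneg)
qed

theorem lemma2p13:
  fixes n :: nat
    and f :: "nat \<Rightarrow> real^'p \<Rightarrow> real"
    and Ls :: "nat \<Rightarrow> real"
    and g :: "real^'m \<Rightarrow> real"
    and H :: "real^'p^'m"
    and \<alpha> Lg :: real
  assumes "n \<ge> 1"
    and "\<forall>i\<in>{1..n}. Ls i > 0 \<and> L_smooth (Ls i) (f i)"
    and "strongly_convex \<alpha> g"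
    and "L_smooth Lg g"
    and "\<forall>x. (1 / real n) * (\<Sum>i=1..n. f i x) = g (H *v x)"
  shows "Max (Ls ` {1..n}) \<ge> \<alpha> * (onorm (\<lambda>x. H *v x))\<^sup>2"
proof -
  have "L_smooth (Max (Ls ` {1..n})) (\<lambda>x. (1 / real n) * (\<Sum>i=1..n. f i x))"
    using L_smooth_mean_Max[of "{1..n}" Ls f] assms(1,2) by simp
  then have "L_smooth (Max (Ls ` {1..n})) (\<lambda>x. g (H *v x))"
    using assms(5) by simp
  then show ?thesis
    using strongly_convex_compose_onorm_le[OF matrix_vector_mul_bounded_linear _ assms(3)] by simp
qed

end
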